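(* Let $T\in\mathbb{N}_+$, $R\ge1$ and $N>0$ with $(N/R)^{1/T}>4$. Let $\mathcal{Q}$ be the set of sequences $Q=(Q^{(1)},\dots,Q^{(T)})\in\mathbb{R}_+^T$ with $Q^{(1)}\le Q^{(2)}\le\dots\le Q^{(T)}$, $Q^{(1)}\ge R$, and $\sum_{s=1}^TQ^{(s)}\ge N$. For $Q\in\mathcal{Q}$ and $S\subseteq[T]$ define $\phi_Q(\emptyset)=R$ and $\phi_Q(S)=\sum_{s\in S}Q^{(s)}$ for $S\ne\emptyset$. Then $$\inf_{Q\in\mathcal{Q}}\ \sup_{x\in[R,N]}\ \min_{S\subseteq[T]:\ \phi_Q(S)>x}\frac{\phi_Q(S)}{x}\ \ge\ \frac18\Big(\frac{N}{R}\Big)^{1/T},$$ with the convention that a minimum over an empty set is $+\infty$. *)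

theory Defs
  imports Complex_Main "HOL-Library.Extended_Real"
begin

definition phiQ :: "real \<Rightarrow> (nat \<Rightarrow> real) \<Rightarrow> nat set \<Rightarrow> real" where
  "phiQ R Q S = (if S = {} then R else (\<Sum>s\<in>S. Q s))"

text \<open>The admissible sequences Q = (Q 1, ..., Q T) (only values on {1..T} matter).\<close>
definition admissibleQ :: "nat \<Rightarrow> real \<Rightarrow> real \<Rightarrow> (nat \<Rightarrow> real) set" where
  "admissibleQ T R N = {Q. (\<forall>s\<in>{1..T}. Q s > 0)
      \<and> (\<forall>s. 1 \<le> s \<and> s < T \<longrightarrow> Q s \<le> Q (s + 1))
      \<and> Q 1 \<ge> R \<and> (\<Sum>s=1..T. Q s) \<ge> N}"

text \<open>min over S \<subseteq> [T] with phi_Q(S) > x of phi_Q(S)/x; empty minimum is +\<infinity>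
  (the Inf of the empty set in ereal is \<top> = \<infinity>).\<close>
definition minRatio :: "nat \<Rightarrow> real \<Rightarrow> (nat \<Rightarrow> real) \<Rightarrow> real \<Rightarrow> ereal" where
  "minRatio T R Q x = (INF S \<in> {S. S \<subseteq> {1..T} \<and> phiQ R Q S > x}. ereal (phiQ R Q S / x))"

end

theory Submission
  imports Defs
begin

text \<open>Write \<open>P k = phiQ R Q {1..k}\<close> for the prefix sums, so \<open>P 0 = R\<close>, and let
  \<open>c = (N/R) powr (1/T) / 8\<close>. If every step satisfied \<open>Q (k+1) \<le> c P k\<close>, the prefix sums would grow
  at most like \<open>(1 + c)\<^sup>k R\<close>, and \<open>(1 + c)\<^sup>T R < N\<close> contradicts \<open>P T \<ge> N\<close>. At the first
  step \<open>k\<close> violating this, \<open>x = P k\<close> lies in \<open>[R, N]\<close>, and any \<open>S\<close> with \<open>phiQ R Q S > x\<close>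
  must contain an index beyond \<open>k\<close>; by monotonicity \<open>phiQ R Q S \<ge> Q (k+1) > c x\<close>.\<close>

lemma phiQ_prefix_Suc_le:
  assumes "R \<ge> 0"
  shows "phiQ R Q {1..Suc k} \<le> phiQ R Q {1..k} + Q (Suc k)"
  using assms by (cases "k = 0") (simp_all add: phiQ_def)

lemma phiQ_prefix_ge:
  assumes "Q 1 \<ge> R" and "\<And>s. s \<in> {1..k} \<Longrightarrow> Q s \<ge> 0"
  shows "phiQ R Q {1..k} \<ge> R"
proof (cases "k = 0")
  case False
  then have "Q 1 \<le> (\<Sum>s=1..k. Q s)"
    using assms(2) by (intro member_le_sum) auto
  with False assms(1) show ?thesis by (simp add: phiQ_def)
qed (simp add: phiQ_def)

lemma phiQ_prefix_geometric_bound: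
  assumes "c \<ge> 0" and "R \<ge> 0"
    and small_steps: "\<And>j. j < k \<Longrightarrow> Q (Suc j) \<le> c * phiQ R Q {1..j}"
  shows "phiQ R Q {1..k} \<le> (1 + c) ^ k * R"
  using small_steps
proof (induction k)
  case 0
  then show ?case by (simp add: phiQ_def)
next
  case (Suc k)
  then have IH: "phiQ R Q {1..k} \<le> (1 + c) ^ k * R" by simp
  have "phiQ R Q {1..Suc k} \<le> phiQ R Q {1..k} + Q (Suc k)"
    using \<open>R \<ge> 0\<close> by (rule phiQ_prefix_Suc_le)
  also have "\<dots> \<le> (1 + c) * phiQ R Q {1..k}"
    using Suc.prems[of k] by (simp add: algebra_simps)
  also have "\<dots> \<le> (1 + c) * ((1 + c) ^ k * R)"
    using IH \<open>c \<ge> 0\<close> by (intro mult_left_mono) auto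
  finally show ?case by simp
qed

lemma obtain_first_large_step:
  assumes "c \<ge> 0" and "R \<ge> 0" and "(1 + c) ^ T * R < phiQ R Q {1..T}"
  obtains k where "k < T" and "c * phiQ R Q {1..k} < Q (Suc k)"
    and "phiQ R Q {1..k} \<le> (1 + c) ^ k * R"
proof -
  let ?large = "\<lambda>k. k < T \<and> c * phiQ R Q {1..k} < Q (Suc k)"
  have "\<exists>k. ?large k"
  proof (rule ccontr)
    assume "\<nexists>k. ?large k"
    then have "Q (Suc j) \<le> c * phiQ R Q {1..j}" if "j < T" for j
      using that by (meson not_less)
    then have "phiQ R Q {1..T} \<le> (1 + c) ^ T * R"
      by (rule phiQ_prefix_geometric_bound[OF assms(1,2)])
    with assms(3) show False by simp
  qed
  then obtain k where "?large k" and first: "\<And>j. j < k \<Longrightarrow> \<not> ?large j"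
    using exists_least_iff[of ?large] by blast
  moreover have "Q (Suc j) \<le> c * phiQ R Q {1..j}" if "j < k" for j
    using first[OF that] that \<open>?large k\<close> by auto
  then have "phiQ R Q {1..k} \<le> (1 + c) ^ k * R"
    by (rule phiQ_prefix_geometric_bound[OF assms(1,2)])
  ultimately show ?thesis using that by blast
qed

lemma phiQ_exceeding_prefix_ge_next:
  assumes nonneg: "\<And>s. s \<in> {1..T} \<Longrightarrow> Q s \<ge> 0"
    and mono: "\<forall>s. 1 \<le> s \<and> s < T \<longrightarrow> Q s \<le> Q (s + 1)"
    and "k < T" and "S \<subseteq> {1..T}" and "R \<le> phiQ R Q {1..k}" and exceeds: "phiQ R Q {1..k} < phiQ R Q S"
  shows "Q (Suc k) \<le> phiQ R Q S"
proof -
  have "S \<noteq> {}" using assms(5,6) by (auto simp: phiQ_def)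
  have "\<not> S \<subseteq> {1..k}"
  proof
    assume "S \<subseteq> {1..k}"
    with \<open>S \<noteq> {}\<close> have "k \<noteq> 0" by auto
    have "(\<Sum>s\<in>S. Q s) \<le> (\<Sum>s=1..k. Q s)"
      using \<open>S \<subseteq> {1..k}\<close> \<open>k < T\<close> nonneg by (intro sum_mono2) auto
    with exceeds \<open>S \<noteq> {}\<close> \<open>k \<noteq> 0\<close> show False by (simp add: phiQ_def)
  qed
  then obtain j where "j \<in> S" "k < j" "j \<le> T" using \<open>S \<subseteq> {1..T}\<close> by fastforce
  have "Q (Suc k) \<le> Q j"
  proof (rule lift_Suc_mono_le_ivl[where N = "{1..<T}"])
    show "Q n \<le> Q (Suc n)" if "n \<in> {1..<T}" for n using mono that by simp
    show "{Suc k..<j} \<subseteq> {1..<T}" using \<open>j \<le> T\<close> by auto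
  qed (use \<open>k < j\<close> in simp)
  also have "\<dots> \<le> (\<Sum>s\<in>S. Q s)"
    using \<open>j \<in> S\<close> \<open>S \<subseteq> {1..T}\<close> nonneg
    by (intro member_le_sum) (auto intro: finite_subset)
  finally show ?thesis using \<open>S \<noteq> {}\<close> by (simp add: phiQ_def)
qed

lemma minRatio_ge:
  assumes "x > 0" and "\<And>S. S \<subseteq> {1..T} \<Longrightarrow> x < phiQ R Q S \<Longrightarrow> c * x \<le> phiQ R Q S"
  shows "ereal c \<le> minRatio T R Q x"
  unfolding minRatio_def
proof (rule INF_greatest)
  fix S assume "S \<in> {S. S \<subseteq> {1..T} \<and> x < phiQ R Q S}"
  then have "c * x \<le> phiQ R Q S" using assms(2) by blast
  then show "ereal c \<le> ereal (phiQ R Q S / x)" using \<open>x > 0\<close> by (simp add: pos_le_divide_eq)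
qed

lemma power_mult_less_of_less_root:
  assumes "T \<ge> 1" and "R > 0" and "N > 0" and "1 \<le> b" and "b < (N / R) powr (1 / real T)"
    and "k \<le> T"
  shows "b ^ k * R < N"
proof -
  have "b ^ k \<le> b ^ T"
    using \<open>1 \<le> b\<close> \<open>k \<le> T\<close> by (rule power_increasing[rotated])
  also have "\<dots> < ((N / R) powr (1 / real T)) ^ T"
    using assms by (intro power_strict_mono) auto
  also have "\<dots> = N / R"
    using assms by (simp add: powr_realpow[symmetric] powr_powr)
  finally show ?thesis using \<open>R > 0\<close> by (simp add: pos_less_divide_eq)
qed

theorem mainTheorem13:
  fixes T :: nat and R N :: real
  assumes "T \<ge> 1" and "R \<ge> 1" and "N > 0" and "(N / R) powr (1 / real T) > 4"
  shows "(INF Q \<in> admissibleQ T R N. SUP x \<in> {R..N}. minRatio T R Q x)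
           \<ge> ereal ((1/8) * (N / R) powr (1 / real T))"
proof (rule INF_greatest)
  fix Q assume "Q \<in> admissibleQ T R N"
  then have nonneg: "\<And>s. s \<in> {1..T} \<Longrightarrow> Q s \<ge> 0"
    and mono: "\<forall>s. 1 \<le> s \<and> s < T \<longrightarrow> Q s \<le> Q (s + 1)"
    and "Q 1 \<ge> R" and total: "N \<le> phiQ R Q {1..T}"
    using \<open>T \<ge> 1\<close> unfolding admissibleQ_def phiQ_def by (auto intro: less_imp_le)
  define c where "c = (N / R) powr (1 / real T) / 8"
  have "c \<ge> 0" "R \<ge> 0" using assms by (simp_all add: c_def)
  have growth: "(1 + c) ^ k * R < N" if "k \<le> T" for k
    using assms \<open>c \<ge> 0\<close> that by (intro power_mult_less_of_less_root) (simp_all add: c_def)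
  have "(1 + c) ^ T * R < phiQ R Q {1..T}" using growth[of T] total by simp
  then obtain k where "k < T" and large_step: "c * phiQ R Q {1..k} < Q (Suc k)"
    and "phiQ R Q {1..k} \<le> (1 + c) ^ k * R"
    by (rule obtain_first_large_step[OF \<open>c \<ge> 0\<close> \<open>R \<ge> 0\<close>])
  define x where "x = phiQ R Q {1..k}"
  have "R \<le> x" using \<open>Q 1 \<ge> R\<close> nonneg \<open>k < T\<close> unfolding x_def by (intro phiQ_prefix_ge) auto
  have "x \<le> N" using growth[of k] \<open>k < T\<close> \<open>phiQ R Q {1..k} \<le> (1 + c) ^ k * R\<close>
    unfolding x_def by simp
  have "ereal c \<le> minRatio T R Q x"
  proof (rule minRatio_ge)
    show "x > 0" using \<open>R \<le> x\<close> \<open>R \<ge> 1\<close> by simp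
    fix S assume "S \<subseteq> {1..T}" and "x < phiQ R Q S"
    then have "Q (Suc k) \<le> phiQ R Q S"
      using phiQ_exceeding_prefix_ge_next[OF nonneg mono \<open>k < T\<close>] \<open>R \<le> x\<close> unfolding x_def by blast
    with large_step show "c * x \<le> phiQ R Q S" unfolding x_def by simp
  qed
  also have "\<dots> \<le> (SUP x\<in>{R..N}. minRatio T R Q x)"
    using \<open>R \<le> x\<close> \<open>x \<le> N\<close> by (intro SUP_upper) auto
  finally show "ereal (1 / 8 * (N / R) powr (1 / real T)) \<le> (SUP x\<in>{R..N}. minRatio T R Q x)"
    by (simp add: c_def)
qed

end
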